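(* The Banach space $c$ of convergent real sequences (with the sup norm) can be U-embedded into $C[0,1]$.
   Context: $C[0,1]$ carries the sup norm. A linear isometry $T\colon X\to Y$ is a U-embedding if every $x^*\in X^*$ has a unique $y^*\in Y^*$ with $T^*(y^* )=x^*$ and $\|y^*\|=\|x^*\|$; "$X$ can be U-embedded into $Y$" means such a $T$ exists. *)

theory Defs
  imports "HOL-Analysis.Analysis"
begin

definition c_space :: "(nat \<Rightarrow> real) set" where
  "c_space = {x. convergent x}"

definition c_norm :: "(nat \<Rightarrow> real) \<Rightarrow> real" where
  "c_norm x = (SUP n. \<bar>x n\<bar>)"

text \<open>C[0,1]: continuous functions on [0,1], normalised to be 0 outside [0,1]
so that each element of C[0,1] has exactly one representative.\<close>
definition C01 :: "(real \<Rightarrow> real) set" where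
  "C01 = {f. continuous_on {0..1} f \<and> (\<forall>t. t \<notin> {0..1} \<longrightarrow> f t = 0)}"

definition C01_norm :: "(real \<Rightarrow> real) \<Rightarrow> real" where
  "C01_norm f = (SUP t\<in>{0..1}. \<bar>f t\<bar>)"

definition lin_on :: "('a \<Rightarrow> real) set \<Rightarrow> (('a \<Rightarrow> real) \<Rightarrow> 'b) \<Rightarrow> ('b \<Rightarrow> 'b \<Rightarrow> 'b) \<Rightarrow> (real \<Rightarrow> 'b \<Rightarrow> 'b) \<Rightarrow> bool" where
  "lin_on V F add sc \<longleftrightarrow>
     (\<forall>x\<in>V. \<forall>y\<in>V. F (\<lambda>i. x i + y i) = add (F x) (F y)) \<and>
     (\<forall>a. \<forall>x\<in>V. F (\<lambda>i. a * x i) = sc a (F x))"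

text \<open>Continuous (bounded) linear functionals on the normed space (V, N);
they are compared only on V.\<close>
definition is_dual :: "('a \<Rightarrow> real) set \<Rightarrow> (('a \<Rightarrow> real) \<Rightarrow> real) \<Rightarrow> (('a \<Rightarrow> real) \<Rightarrow> real) \<Rightarrow> bool" where
  "is_dual V N \<phi> \<longleftrightarrow> lin_on V \<phi> (+) (*) \<and> (\<exists>K. \<forall>x\<in>V. \<bar>\<phi> x\<bar> \<le> K * N x)"

definition dual_norm :: "('a \<Rightarrow> real) set \<Rightarrow> (('a \<Rightarrow> real) \<Rightarrow> real) \<Rightarrow> (('a \<Rightarrow> real) \<Rightarrow> real) \<Rightarrow> real" where
  "dual_norm V N \<phi> = (SUP x\<in>{x\<in>V. N x \<le> 1}. \<bar>\<phi> x\<bar>)"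

definition U_embedding ::
  "('a \<Rightarrow> real) set \<Rightarrow> (('a \<Rightarrow> real) \<Rightarrow> real) \<Rightarrow> ('b \<Rightarrow> real) set \<Rightarrow> (('b \<Rightarrow> real) \<Rightarrow> real)
    \<Rightarrow> (('a \<Rightarrow> real) \<Rightarrow> ('b \<Rightarrow> real)) \<Rightarrow> bool" where
  "U_embedding X NX Y NY T \<longleftrightarrow>
     (\<forall>x\<in>X. T x \<in> Y) \<and>
     lin_on X T (\<lambda>f g i. f i + g i) (\<lambda>a f i. a * f i) \<and>
     (\<forall>x\<in>X. NY (T x) = NX x) \<and>
     (\<forall>\<phi>. is_dual X NX \<phi> \<longrightarrow>
        (\<exists>\<psi>. (is_dual Y NY \<psi> \<and> (\<forall>x\<in>X. \<psi> (T x) = \<phi> x) \<and> dual_norm Y NY \<psi> = dual_norm X NX \<phi>) \<and>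
            (\<forall>\<psi>'. is_dual Y NY \<psi>' \<and> (\<forall>x\<in>X. \<psi>' (T x) = \<phi> x) \<and> dual_norm Y NY \<psi>' = dual_norm X NX \<phi>
                 \<longrightarrow> (\<forall>y\<in>Y. \<psi>' y = \<psi> y))))"

definition U_embeddable ::
  "('a \<Rightarrow> real) set \<Rightarrow> (('a \<Rightarrow> real) \<Rightarrow> real) \<Rightarrow> ('b \<Rightarrow> real) set \<Rightarrow> (('b \<Rightarrow> real) \<Rightarrow> real) \<Rightarrow> bool" where
  "U_embeddable X NX Y NY \<longleftrightarrow> (\<exists>T. U_embedding X NX Y NY T)"

end

theory Submission
  imports Defs
begin

text \<open>Put nodes 1/(n+1) accumulating at 0. A convergent sequence x is sent to the continuous
  function that takes the value x n at the n-th node and lim x at 0, interpolating through hats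
  with disjoint supports and damped by the factor 1 - dist(t, nodes). Sampling at the nodes is a
  norm-one left inverse R of this isometry T, so \<phi> \<circ> R is a norm-preserving extension of any
  functional \<phi> on c. It is the only one because every norm-preserving extension \<psi> vanishes on
  the kernel of R: a function g vanishing on the nodes is, up to \<delta> in norm, supported at
  distance at least \<eta> from the nodes, where the damping leaves room \<eta> above every T x with
  norm at most 1. Adding a small multiple of that part of g to some T x with \<phi> x close to the
  norm of \<phi> shows that \<psi> g > 0 would push \<psi> above its norm.\<close>

section \<open>Dual norms on sup-normed function spaces\<close>

lemma is_dual_add:
  "is_dual V N \<phi> \<Longrightarrow> x \<in> V \<Longrightarrow> y \<in> V \<Longrightarrow> \<phi> (\<lambda>i. x i + y i) = \<phi> x + \<phi> y"
  by (simp add: is_dual_def lin_on_def)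

lemma is_dual_scale: "is_dual V N \<phi> \<Longrightarrow> x \<in> V \<Longrightarrow> \<phi> (\<lambda>i. a * x i) = a * \<phi> x"
  by (simp add: is_dual_def lin_on_def)

locale sup_norm_space =
  fixes V :: "('a \<Rightarrow> real) set" and N :: "('a \<Rightarrow> real) \<Rightarrow> real"
  assumes abs_le_norm: "z \<in> V \<Longrightarrow> \<bar>z i\<bar> \<le> N z"
    and norm_le: "(\<And>i. \<bar>z i\<bar> \<le> B) \<Longrightarrow> N z \<le> B"
    and zero_mem: "(\<lambda>_. 0) \<in> V"
    and add_mem: "z \<in> V \<Longrightarrow> w \<in> V \<Longrightarrow> (\<lambda>i. z i + w i) \<in> V"
    and scale_mem: "z \<in> V \<Longrightarrow> (\<lambda>i. a * z i) \<in> V"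
begin

lemma norm_nonneg: "z \<in> V \<Longrightarrow> 0 \<le> N z"
  using abs_le_norm[of z undefined] by linarith

lemma dual_bounded:
  assumes "is_dual V N \<phi>"
  shows "bdd_above ((\<lambda>z. \<bar>\<phi> z\<bar>) ` {z\<in>V. N z \<le> 1})"
proof -
  obtain K where K: "\<And>z. z \<in> V \<Longrightarrow> \<bar>\<phi> z\<bar> \<le> K * N z"
    using assms by (auto simp: is_dual_def)
  have "\<bar>\<phi> z\<bar> \<le> \<bar>K\<bar>" if "z \<in> V" "N z \<le> 1" for z
  proof -
    have "\<bar>\<phi> z\<bar> \<le> \<bar>K\<bar> * N z"
      using K[OF that(1)] norm_nonneg[OF that(1)] by (meson abs_ge_self mult_right_mono order_trans)
    also have "\<dots> \<le> \<bar>K\<bar>"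
      using that norm_nonneg by (simp add: mult_left_le)
    finally show ?thesis .
  qed
  then show ?thesis by (auto intro!: bdd_aboveI2)
qed

lemma abs_le_dual_norm:
  "is_dual V N \<phi> \<Longrightarrow> y \<in> V \<Longrightarrow> N y \<le> 1 \<Longrightarrow> \<bar>\<phi> y\<bar> \<le> dual_norm V N \<phi>"
  unfolding dual_norm_def by (rule cSUP_upper[OF _ dual_bounded]) auto

lemma dual_norm_nonneg: "is_dual V N \<phi> \<Longrightarrow> 0 \<le> dual_norm V N \<phi>"
  using abs_le_dual_norm[OF _ zero_mem] norm_le[of "\<lambda>_. 0" 1] by force

lemma dual_norm_le:
  "(\<And>y. y \<in> V \<Longrightarrow> N y \<le> 1 \<Longrightarrow> \<bar>\<phi> y\<bar> \<le> B) \<Longrightarrow> dual_norm V N \<phi> \<le> B"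
  unfolding dual_norm_def using zero_mem norm_le[of "\<lambda>_. 0" 1]
  by (intro cSUP_least) auto

lemma abs_le_dual_norm_mult:
  assumes \<phi>: "is_dual V N \<phi>" and y: "y \<in> V"
  shows "\<bar>\<phi> y\<bar> \<le> dual_norm V N \<phi> * N y"
proof (cases "N y = 0")
  case True
  then have "y = (\<lambda>i. 0 * y i)"
    using abs_le_norm[OF y] by (metis abs_le_zero_iff mult_zero_left)
  then have "\<phi> y = 0"
    using is_dual_scale[OF \<phi> y, of 0] by simp
  then show ?thesis using True by simp
next
  case False
  then have pos: "N y > 0" using norm_nonneg[OF y] by linarith
  let ?y = "\<lambda>i. (1 / N y) * y i"
  have "N ?y \<le> 1"
    using abs_le_norm[OF y] pos by (intro norm_le) (simp add: abs_mult divide_simps)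
  then have "\<bar>\<phi> ?y\<bar> \<le> dual_norm V N \<phi>"
    by (rule abs_le_dual_norm[OF \<phi> scale_mem[OF y]])
  moreover have "\<bar>\<phi> y\<bar> = \<bar>\<phi> ?y\<bar> * N y"
    using is_dual_scale[OF \<phi> y, of "1 / N y"] pos by (simp add: abs_mult)
  ultimately show ?thesis using pos by (simp add: mult_right_mono)
qed

lemma dual_norm_approx:
  assumes \<phi>: "is_dual V N \<phi>" and e: "e > 0"
  obtains x where "x \<in> V" "N x \<le> 1" "dual_norm V N \<phi> - e < \<phi> x"
proof -
  have "{z\<in>V. N z \<le> 1} \<noteq> {}"
    using zero_mem norm_le[of "\<lambda>_. 0" 1] by auto
  then obtain x where x: "x \<in> V" "N x \<le> 1" "dual_norm V N \<phi> - e < \<bar>\<phi> x\<bar>"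
    using e less_cSUP_iff[OF _ dual_bounded[OF \<phi>], of "dual_norm V N \<phi> - e"]
    unfolding dual_norm_def by auto
  let ?x = "\<lambda>i. (-1) * x i"
  have "N ?x \<le> 1"
    using abs_le_norm[OF x(1)] x(2) by (intro norm_le) (simp add: order_trans[OF _ x(2)])
  have "\<phi> ?x = - \<phi> x"
    using is_dual_scale[OF \<phi> x(1), of "-1"] by simp
  show ?thesis
  proof (cases "\<phi> x \<ge> 0")
    case True
    then show ?thesis using that[OF x(1,2)] x(3) by simp
  next
    case False
    then show ?thesis
      using that[OF scale_mem[OF x(1)] \<open>N ?x \<le> 1\<close>] \<open>\<phi> ?x = - \<phi> x\<close> x(3) by simp
  qed
qed

end

section \<open>Norm-preserving extensions through an isometric retract\<close>

locale isometric_retract =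
  X: sup_norm_space X NX + Y: sup_norm_space Y NY
  for X :: "('a \<Rightarrow> real) set" and NX and Y :: "('b \<Rightarrow> real) set" and NY +
  fixes T :: "('a \<Rightarrow> real) \<Rightarrow> ('b \<Rightarrow> real)" and R :: "('b \<Rightarrow> real) \<Rightarrow> ('a \<Rightarrow> real)"
  assumes embed_mem: "x \<in> X \<Longrightarrow> T x \<in> Y"
    and embed_linear: "lin_on X T (\<lambda>f g i. f i + g i) (\<lambda>a f i. a * f i)"
    and norm_embed: "x \<in> X \<Longrightarrow> NY (T x) = NX x"
    and retract_mem: "f \<in> Y \<Longrightarrow> R f \<in> X"
    and retract_linear: "lin_on Y R (\<lambda>f g i. f i + g i) (\<lambda>a f i. a * f i)"
    and norm_retract_le: "f \<in> Y \<Longrightarrow> NX (R f) \<le> NY f"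
    and retract_embed: "x \<in> X \<Longrightarrow> R (T x) = x"
begin

definition norm_preserving_extension ::
    "(('a \<Rightarrow> real) \<Rightarrow> real) \<Rightarrow> (('b \<Rightarrow> real) \<Rightarrow> real) \<Rightarrow> bool" where
  "norm_preserving_extension \<phi> \<psi> \<longleftrightarrow>
     is_dual Y NY \<psi> \<and> (\<forall>x\<in>X. \<psi> (T x) = \<phi> x) \<and> dual_norm Y NY \<psi> = dual_norm X NX \<phi>"

definition headroom_approximable :: "('b \<Rightarrow> real) \<Rightarrow> bool" where
  "headroom_approximable g \<longleftrightarrow>
     (\<forall>\<delta>>0. \<exists>u\<in>Y. \<exists>v\<in>Y. \<exists>\<kappa>>0. g = (\<lambda>t. u t + v t) \<and> NY v \<le> \<delta> \<and>
        (\<forall>x\<in>X. NX x \<le> 1 \<longrightarrow> NY (\<lambda>t. T x t + \<kappa> * u t) \<le> 1))"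

lemma retract_add: "f \<in> Y \<Longrightarrow> g \<in> Y \<Longrightarrow> R (\<lambda>t. f t + g t) = (\<lambda>i. R f i + R g i)"
  using retract_linear by (simp add: lin_on_def)

lemma retract_scale: "f \<in> Y \<Longrightarrow> R (\<lambda>t. a * f t) = (\<lambda>i. a * R f i)"
  using retract_linear by (simp add: lin_on_def)

lemma dual_norm_le_extension:
  assumes \<psi>: "is_dual Y NY \<psi>" and ext: "\<And>x. x \<in> X \<Longrightarrow> \<psi> (T x) = \<phi> x"
  shows "dual_norm X NX \<phi> \<le> dual_norm Y NY \<psi>"
proof (rule X.dual_norm_le)
  fix x assume "x \<in> X" "NX x \<le> 1"
  then show "\<bar>\<phi> x\<bar> \<le> dual_norm Y NY \<psi>"
    using Y.abs_le_dual_norm[OF \<psi> embed_mem] norm_embed ext by simp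
qed

lemma norm_preserving_extension_retract:
  assumes \<phi>: "is_dual X NX \<phi>"
  shows "norm_preserving_extension \<phi> (\<lambda>f. \<phi> (R f))"
proof -
  let ?\<psi> = "\<lambda>f. \<phi> (R f)"
  have bound: "\<bar>?\<psi> f\<bar> \<le> dual_norm X NX \<phi> * NY f" if "f \<in> Y" for f
    using X.abs_le_dual_norm_mult[OF \<phi> retract_mem[OF that]] norm_retract_le[OF that]
      X.dual_norm_nonneg[OF \<phi>] by (meson mult_left_mono order_trans)
  have \<psi>: "is_dual Y NY ?\<psi>"
    unfolding is_dual_def lin_on_def
  proof (intro conjI ballI allI exI)
    show "?\<psi> (\<lambda>i. f i + g i) = ?\<psi> f + ?\<psi> g" if "f \<in> Y" "g \<in> Y" for f g
      using that retract_mem is_dual_add[OF \<phi>] by (simp add: retract_add)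
    show "?\<psi> (\<lambda>i. a * f i) = a * ?\<psi> f" if "f \<in> Y" for a f
      using that retract_mem is_dual_scale[OF \<phi>] by (simp add: retract_scale)
  qed (rule bound)
  moreover have ext: "?\<psi> (T x) = \<phi> x" if "x \<in> X" for x
    using retract_embed[OF that] by simp
  moreover have "dual_norm Y NY ?\<psi> \<le> dual_norm X NX \<phi>"
    using bound Y.norm_nonneg X.dual_norm_nonneg[OF \<phi>]
    by (intro Y.dual_norm_le) (meson mult_left_le order_trans)
  ultimately show ?thesis
    using dual_norm_le_extension[OF \<psi> ext] by (simp add: norm_preserving_extension_def)
qed

lemma norm_preserving_extension_nonpos:
  assumes \<phi>: "is_dual X NX \<phi>" and \<psi>: "norm_preserving_extension \<phi> \<psi>"
    and g: "g \<in> Y" "headroom_approximable g"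
  shows "\<psi> g \<le> 0"
proof -
  define M where "M = dual_norm X NX \<phi>"
  have M: "M \<ge> 0" "dual_norm Y NY \<psi> = M"
    using X.dual_norm_nonneg[OF \<phi>] \<psi> by (auto simp: M_def norm_preserving_extension_def)
  have \<psi>_dual: "is_dual Y NY \<psi>" and ext: "\<And>x. x \<in> X \<Longrightarrow> \<psi> (T x) = \<phi> x"
    using \<psi> by (auto simp: norm_preserving_extension_def)
  have small: "\<psi> g \<le> M * \<delta>" if "\<delta> > 0" for \<delta>
  proof -
    obtain u v \<kappa> where uv: "u \<in> Y" "v \<in> Y" "g = (\<lambda>t. u t + v t)" "NY v \<le> \<delta>"
      and \<kappa>: "\<kappa> > 0" and room: "\<And>x. x \<in> X \<Longrightarrow> NX x \<le> 1 \<Longrightarrow> NY (\<lambda>t. T x t + \<kappa> * u t) \<le> 1"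
      using g(2) \<open>\<delta> > 0\<close> unfolding headroom_approximable_def by metis
    have "\<kappa> * \<psi> u \<le> 0 + e" if "e > 0" for e
    proof -
      obtain x where x: "x \<in> X" "NX x \<le> 1" "M - e < \<phi> x"
        using X.dual_norm_approx[OF \<phi> \<open>e > 0\<close>] M_def by blast
      have h: "(\<lambda>t. T x t + \<kappa> * u t) \<in> Y"
        by (intro Y.add_mem Y.scale_mem embed_mem x(1) uv(1))
      have "\<phi> x + \<kappa> * \<psi> u = \<psi> (\<lambda>t. T x t + \<kappa> * u t)"
        using is_dual_add[OF \<psi>_dual embed_mem[OF x(1)] Y.scale_mem[OF uv(1)]]
          is_dual_scale[OF \<psi>_dual uv(1)] ext[OF x(1)] by simp
      also have "\<dots> \<le> M"
        using Y.abs_le_dual_norm[OF \<psi>_dual h room[OF x(1,2)]] M(2) by simp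
      finally show ?thesis using x(3) by simp
    qed
    then have "\<psi> u \<le> 0"
      using \<kappa> by (meson field_le_epsilon mult_le_0_iff not_less)
    moreover have "\<psi> g = \<psi> u + \<psi> v"
      using is_dual_add[OF \<psi>_dual uv(1,2)] uv(3) by simp
    moreover have "\<psi> v \<le> M * \<delta>"
      using Y.abs_le_dual_norm_mult[OF \<psi>_dual uv(2)] uv(4) M by (metis abs_le_D1 mult_left_mono order_trans)
    ultimately show ?thesis by linarith
  qed
  show ?thesis
  proof (rule field_le_epsilon)
    fix e :: real assume "e > 0"
    then have "\<psi> g \<le> M * (e / (M + 1))" using M(1) by (intro small) simp
    also have "\<dots> \<le> e" using \<open>e > 0\<close> M(1) by (simp add: divide_simps)
    finally show "\<psi> g \<le> 0 + e" by simp
  qed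
qed

lemma norm_preserving_extension_vanishes_on_kernel:
  assumes \<phi>: "is_dual X NX \<phi>" and \<psi>: "norm_preserving_extension \<phi> \<psi>"
    and headroom: "\<And>g. g \<in> Y \<Longrightarrow> R g = (\<lambda>_. 0) \<Longrightarrow> headroom_approximable g"
    and g: "g \<in> Y" "R g = (\<lambda>_. 0)"
  shows "\<psi> g = 0"
proof -
  have \<psi>_dual: "is_dual Y NY \<psi>" using \<psi> by (simp add: norm_preserving_extension_def)
  have "R (\<lambda>t. (-1) * g t) = (\<lambda>_. 0)"
    unfolding retract_scale[OF g(1)] g(2) by simp
  then have "\<psi> (\<lambda>t. (-1) * g t) \<le> 0"
    by (intro norm_preserving_extension_nonpos[OF \<phi> \<psi>] Y.scale_mem g headroom)
  moreover have "\<psi> g \<le> 0"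
    by (intro norm_preserving_extension_nonpos[OF \<phi> \<psi>] g headroom)
  ultimately show ?thesis using is_dual_scale[OF \<psi>_dual g(1), of "-1"] by simp
qed

lemma norm_preserving_extension_eq_retract:
  assumes \<phi>: "is_dual X NX \<phi>" and \<psi>: "norm_preserving_extension \<phi> \<psi>"
    and kernel: "\<And>g. g \<in> Y \<Longrightarrow> R g = (\<lambda>_. 0) \<Longrightarrow> \<psi> g = 0"
    and f: "f \<in> Y"
  shows "\<psi> f = \<phi> (R f)"
proof -
  have \<psi>_dual: "is_dual Y NY \<psi>" and ext: "\<And>x. x \<in> X \<Longrightarrow> \<psi> (T x) = \<phi> x"
    using \<psi> by (auto simp: norm_preserving_extension_def)
  define g where "g = (\<lambda>t. f t + (-1) * T (R f) t)"
  have TRf: "T (R f) \<in> Y" by (intro embed_mem retract_mem f)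
  have g_mem: "g \<in> Y" unfolding g_def by (intro Y.add_mem Y.scale_mem f TRf)
  have "R g = (\<lambda>i. R f i + (-1) * R (T (R f)) i)"
    unfolding g_def retract_add[OF f Y.scale_mem[OF TRf]] retract_scale[OF TRf] ..
  then have "R g = (\<lambda>_. 0)" by (simp add: retract_embed retract_mem[OF f])
  then have "\<psi> g = 0" by (rule kernel[OF g_mem])
  moreover have "f = (\<lambda>t. T (R f) t + g t)" by (simp add: g_def)
  then have "\<psi> f = \<psi> (T (R f)) + \<psi> g" using is_dual_add[OF \<psi>_dual TRf g_mem] by metis
  ultimately show ?thesis using ext[OF retract_mem[OF f]] by simp
qed

lemma U_embedding_if_kernel_headroom_approximable:
  assumes "\<And>g. g \<in> Y \<Longrightarrow> R g = (\<lambda>_. 0) \<Longrightarrow> headroom_approximable g"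
  shows "U_embedding X NX Y NY T"
proof -
  have "\<exists>\<psi>. norm_preserving_extension \<phi> \<psi> \<and>
      (\<forall>\<psi>'. norm_preserving_extension \<phi> \<psi>' \<longrightarrow> (\<forall>f\<in>Y. \<psi>' f = \<psi> f))"
    if \<phi>: "is_dual X NX \<phi>" for \<phi>
  proof (intro exI conjI allI impI ballI)
    show "norm_preserving_extension \<phi> (\<lambda>f. \<phi> (R f))"
      by (rule norm_preserving_extension_retract[OF \<phi>])
    fix \<psi> f assume \<psi>: "norm_preserving_extension \<phi> \<psi>" and f: "f \<in> Y"
    have "\<And>g. g \<in> Y \<Longrightarrow> R g = (\<lambda>_. 0) \<Longrightarrow> \<psi> g = 0"
      by (rule norm_preserving_extension_vanishes_on_kernel[OF \<phi> \<psi> assms])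
    then show "\<psi> f = \<phi> (R f)"
      by (rule norm_preserving_extension_eq_retract[OF \<phi> \<psi> _ f])
  qed
  then show ?thesis
    unfolding U_embedding_def norm_preserving_extension_def[symmetric]
    using embed_mem embed_linear norm_embed by blast
qed

end

section \<open>The hat embedding of c into C[0,1]\<close>

lemma abs_le_c_norm:
  assumes "convergent x" shows "\<bar>x n\<bar> \<le> c_norm x"
proof -
  obtain K where "\<And>n. norm (x n) \<le> K"
    using convergent_imp_Bseq[OF assms] unfolding Bseq_def by auto
  then have "bdd_above (range (\<lambda>n. \<bar>x n\<bar>))" by (auto intro!: bdd_aboveI2)
  then show ?thesis unfolding c_norm_def by (rule cSUP_upper[rotated]) simp
qed

lemma c_norm_le: "(\<And>n. \<bar>x n\<bar> \<le> B) \<Longrightarrow> c_norm x \<le> B"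
  unfolding c_norm_def by (rule cSUP_least) auto

lemma abs_lim_le_c_norm: "convergent x \<Longrightarrow> \<bar>lim x\<bar> \<le> c_norm x"
  by (rule LIMSEQ_le_const2[OF tendsto_rabs[OF convergent_LIMSEQ_iff[THEN iffD1]]])
    (auto intro: abs_le_c_norm)

interpretation c: sup_norm_space c_space c_norm
  by unfold_locales
    (auto simp: c_space_def abs_le_c_norm c_norm_le convergent_add convergent_mult convergent_const)

lemma abs_le_C01_norm:
  assumes f: "f \<in> C01" shows "\<bar>f t\<bar> \<le> C01_norm f"
proof -
  have "compact (f ` {0..1})"
    using f by (intro compact_continuous_image) (auto simp: C01_def)
  then obtain B where "\<And>s. s \<in> {0..1} \<Longrightarrow> \<bar>f s\<bar> \<le> B"
    by (fastforce dest: compact_imp_bounded simp: bounded_iff)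
  then have le: "\<bar>f s\<bar> \<le> C01_norm f" if "s \<in> {0..1}" for s
    unfolding C01_norm_def using that by (intro cSUP_upper bdd_aboveI2) auto
  show ?thesis
    using le[of t] le[of 0] f by (cases "t \<in> {0..1}") (auto simp: C01_def)
qed

lemma C01_norm_le: "(\<And>t. t \<in> {0..1} \<Longrightarrow> \<bar>f t\<bar> \<le> B) \<Longrightarrow> C01_norm f \<le> B"
  unfolding C01_norm_def by (rule cSUP_least) auto

interpretation C01: sup_norm_space C01 C01_norm
  by unfold_locales
    (auto simp: C01_def abs_le_C01_norm C01_norm_le intro!: continuous_intros)

definition node :: "nat \<Rightarrow> real" where
  "node n = 1 / (real n + 1)"

text \<open>Half the gap between node n and node (n + 1), so hats have disjoint supports.\<close>
definition hat_radius :: "nat \<Rightarrow> real" where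
  "hat_radius n = 1 / (2 * (real n + 1) * (real n + 2))"

definition hat :: "nat \<Rightarrow> real \<Rightarrow> real" where
  "hat n t = max 0 (1 - \<bar>t - node n\<bar> / hat_radius n)"

definition nodes :: "real set" where
  "nodes = insert 0 (range node)"

text \<open>The index set has at most one element (hat_support_unique), so the sum is finite.\<close>
definition hat_interpolation :: "(nat \<Rightarrow> real) \<Rightarrow> real \<Rightarrow> real" where
  "hat_interpolation x t = lim x + (\<Sum>n | hat n t \<noteq> 0. (x n - lim x) * hat n t)"

definition hat_embedding :: "(nat \<Rightarrow> real) \<Rightarrow> real \<Rightarrow> real" where
  "hat_embedding x t = (if t \<in> {0..1} then (1 - infdist t nodes) * hat_interpolation x t else 0)"

definition node_sampling :: "(real \<Rightarrow> real) \<Rightarrow> nat \<Rightarrow> real" where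
  "node_sampling f n = f (node n)"

lemma node_in_unit_interval: "node n \<in> {0..1}"
  by (simp add: node_def)

lemma nodes_subset_unit_interval: "nodes \<subseteq> {0..1}"
  using node_in_unit_interval by (auto simp: nodes_def)

lemma node_LIMSEQ_0: "node \<longlonglongrightarrow> 0"
  using LIMSEQ_inverse_real_of_nat unfolding node_def by (simp add: inverse_eq_divide add.commute)

lemma hat_radius_pos: "hat_radius n > 0"
  by (simp add: hat_radius_def)

lemma node_gap:
  assumes "n < m" shows "hat_radius n + hat_radius m \<le> node n - node m"
proof -
  have "node m \<le> node (Suc n)" and "hat_radius m \<le> hat_radius n"
    using assms by (simp_all add: node_def hat_radius_def frac_le mult_mono)
  moreover have "node n - node (Suc n) = 2 * hat_radius n"
    unfolding node_def hat_radius_def by (simp add: divide_simps) (simp add: algebra_simps)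
  ultimately show ?thesis by linarith
qed

lemma hat_nonneg: "0 \<le> hat n t"
  by (simp add: hat_def)

lemma hat_le_1: "hat n t \<le> 1"
  using hat_radius_pos[of n] by (simp add: hat_def)

lemma hat_neq_0_iff: "hat n t \<noteq> 0 \<longleftrightarrow> \<bar>t - node n\<bar> < hat_radius n"
  using hat_radius_pos[of n] by (auto simp: hat_def max_def field_simps)

lemma hat_node [simp]: "hat n (node n) = 1"
  by (simp add: hat_def)

lemma hat_support_unique:
  assumes "hat n t \<noteq> 0" "hat m t \<noteq> 0" shows "n = m"
  using node_gap[of n m] node_gap[of m n] assms
  by (cases n m rule: linorder_cases) (auto simp: hat_neq_0_iff)

lemma continuous_on_hat: "continuous_on UNIV (hat n)"
  unfolding hat_def by (intro continuous_intros) (simp add: hat_radius_def)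

lemma hat_interpolation_eq:
  assumes "hat m t \<noteq> 0"
  shows "hat_interpolation x t = lim x + (x m - lim x) * hat m t"
proof -
  have "{n. hat n t \<noteq> 0} = {m}" using assms hat_support_unique by blast
  then show ?thesis by (simp add: hat_interpolation_def)
qed

lemma hat_interpolation_eq_lim: "(\<And>n. hat n t = 0) \<Longrightarrow> hat_interpolation x t = lim x"
  by (simp add: hat_interpolation_def)

lemma hat_interpolation_node: "hat_interpolation x (node n) = x n"
  using hat_interpolation_eq[of n "node n" x] by simp

lemma abs_hat_interpolation_le:
  assumes x: "convergent x" shows "\<bar>hat_interpolation x t\<bar> \<le> c_norm x"
proof (cases "\<exists>m. hat m t \<noteq> 0")
  case True
  then obtain m where m: "hat m t \<noteq> 0" by blast
  have "hat_interpolation x t = (1 - hat m t) * lim x + hat m t * x m"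
    using hat_interpolation_eq[OF m] by (simp add: algebra_simps)
  also have "\<bar>\<dots>\<bar> \<le> (1 - hat m t) * c_norm x + hat m t * c_norm x"
    using hat_nonneg[of m t] hat_le_1[of m t] abs_lim_le_c_norm[OF x] abs_le_c_norm[OF x, of m]
    by (intro abs_triangle_ineq[THEN order_trans] add_mono)
      (auto simp: abs_mult intro: mult_left_mono)
  finally show ?thesis by (simp add: algebra_simps)
qed (use hat_interpolation_eq_lim abs_lim_le_c_norm[OF x] in auto)

lemma sum_hat_lessThan:
  assumes "hat m t \<noteq> 0"
  shows "(\<Sum>n<N. c n * hat n t) = (if m < N then c m * hat m t else 0)"
proof -
  have "(\<Sum>n<N. c n * hat n t) = (\<Sum>n<N. if n = m then c m * hat m t else 0)"
    using hat_support_unique[OF _ assms] by (intro sum.cong) auto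
  then show ?thesis by simp
qed

text \<open>The partial sums converge uniformly since x n - lim x tends to 0 and the hats have
  disjoint supports.\<close>
lemma continuous_on_hat_interpolation:
  assumes x: "convergent x" shows "continuous_on UNIV (hat_interpolation x)"
proof (rule uniform_limit_theorem[where F=sequentially])
  let ?L = "lim x"
  let ?S = "\<lambda>N t. ?L + (\<Sum>n<N. (x n - ?L) * hat n t)"
  show "\<forall>\<^sub>F N in sequentially. continuous_on UNIV (?S N)"
    using continuous_on_hat
    by (intro always_eventually allI continuous_intros) (auto simp: continuous_on_eq_continuous_at)
  show "uniform_limit UNIV ?S (hat_interpolation x) sequentially"
    unfolding uniform_limit_sequentially_iff
  proof (intro allI impI)
    fix e :: real assume e: "e > 0"
    obtain N where N: "\<And>n. n \<ge> N \<Longrightarrow> \<bar>x n - ?L\<bar> < e"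
      using x e unfolding convergent_LIMSEQ_iff LIMSEQ_def dist_real_def by blast
    have "dist (?S k t) (hat_interpolation x t) < e" if "N \<le> k" for k t
    proof (cases "\<exists>m. hat m t \<noteq> 0")
      case True
      then obtain m where m: "hat m t \<noteq> 0" by blast
      have "\<bar>(x m - ?L) * hat m t\<bar> \<le> \<bar>x m - ?L\<bar>"
        using hat_nonneg[of m t] hat_le_1[of m t] by (simp add: abs_mult mult_left_le)
      then show ?thesis
        using N[of m] that e hat_interpolation_eq[OF m] sum_hat_lessThan[OF m]
        by (auto simp: dist_real_def)
    qed (use e hat_interpolation_eq_lim in \<open>auto simp: dist_real_def\<close>)
    then show "\<exists>N. \<forall>n\<ge>N. \<forall>t\<in>UNIV. dist (?S n t) (hat_interpolation x t) < e" by blast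
  qed
qed simp

lemma hat_interpolation_add:
  assumes "convergent x" "convergent y"
  shows "hat_interpolation (\<lambda>i. x i + y i) t = hat_interpolation x t + hat_interpolation y t"
proof -
  have "lim (\<lambda>i. x i + y i) = lim x + lim y"
    using assms by (intro limI tendsto_add) (auto simp: convergent_LIMSEQ_iff)
  then show ?thesis
    unfolding hat_interpolation_def by (simp add: sum.distrib[symmetric] algebra_simps)
qed

lemma hat_interpolation_scale:
  assumes "convergent x"
  shows "hat_interpolation (\<lambda>i. a * x i) t = a * hat_interpolation x t"
proof -
  have "lim (\<lambda>i. a * x i) = a * lim x"
    using assms by (intro limI tendsto_mult_left) (auto simp: convergent_LIMSEQ_iff)
  then show ?thesis
    unfolding hat_interpolation_def by (simp add: sum_distrib_left algebra_simps)
qed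

lemma infdist_nodes_le: "infdist t nodes \<le> \<bar>t\<bar>"
  using infdist_le[of 0 nodes t] by (simp add: nodes_def dist_real_def)

lemma hat_embedding_mem:
  assumes "convergent x" shows "hat_embedding x \<in> C01"
proof -
  have "continuous_on UNIV (\<lambda>t. (1 - infdist t nodes) * hat_interpolation x t)"
    using continuous_on_hat_interpolation[OF assms] by (intro continuous_intros)
  then have "continuous_on {0..1} (hat_embedding x)"
    by (rule continuous_on_cong[THEN iffD1, rotated 2, OF continuous_on_subset])
      (auto simp: hat_embedding_def)
  then show ?thesis by (simp add: C01_def hat_embedding_def)
qed

lemma hat_embedding_node: "hat_embedding x (node n) = x n"
  using node_in_unit_interval by (simp add: hat_embedding_def nodes_def hat_interpolation_node)

lemma abs_hat_embedding_le:
  assumes x: "convergent x" and t: "t \<in> {0..1}"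
  shows "\<bar>hat_embedding x t\<bar> \<le> (1 - infdist t nodes) * c_norm x"
proof -
  have "0 \<le> 1 - infdist t nodes" using infdist_nodes_le[of t] t by auto
  then show ?thesis
    using t abs_hat_interpolation_le[OF x, of t]
    by (simp add: hat_embedding_def abs_mult mult_left_mono)
qed

lemma abs_hat_embedding_le_headroom:
  assumes x: "convergent x" "c_norm x \<le> 1" and t: "t \<in> {0..1}"
  shows "\<bar>hat_embedding x t\<bar> \<le> 1 - infdist t nodes"
proof -
  have "\<bar>hat_embedding x t\<bar> \<le> (1 - infdist t nodes) * c_norm x"
    by (rule abs_hat_embedding_le[OF x(1) t])
  also have "\<dots> \<le> 1 - infdist t nodes"
    using infdist_nodes_le[of t] t by (intro mult_left_le[OF x(2)]) auto
  finally show ?thesis .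
qed

lemma C01_norm_hat_embedding:
  assumes x: "convergent x" shows "C01_norm (hat_embedding x) = c_norm x"
proof (rule antisym)
  have "\<bar>hat_embedding x t\<bar> \<le> c_norm x" if "t \<in> {0..1}" for t
  proof -
    have "0 \<le> infdist t nodes * c_norm x"
      using x by (intro mult_nonneg_nonneg infdist_nonneg c.norm_nonneg) (simp add: c_space_def)
    then show ?thesis using abs_hat_embedding_le[OF x that] by (simp add: algebra_simps)
  qed
  then show "C01_norm (hat_embedding x) \<le> c_norm x" by (rule C01_norm_le)
  show "c_norm x \<le> C01_norm (hat_embedding x)"
    using abs_le_C01_norm[OF hat_embedding_mem[OF x]] by (metis c_norm_le hat_embedding_node)
qed

lemma hat_embedding_linear:
  "lin_on c_space hat_embedding (\<lambda>f g i. f i + g i) (\<lambda>a f i. a * f i)"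
  by (auto simp: lin_on_def c_space_def hat_embedding_def hat_interpolation_add
      hat_interpolation_scale algebra_simps)

lemma node_sampling_LIMSEQ:
  assumes "f \<in> C01" shows "node_sampling f \<longlonglongrightarrow> f 0"
proof -
  have "continuous_on {0..1} f" using assms by (simp add: C01_def)
  from continuous_on_tendsto_compose[OF this node_LIMSEQ_0] show ?thesis
    using node_in_unit_interval by (simp add: node_sampling_def[abs_def])
qed

lemma node_sampling_hat_embedding: "node_sampling (hat_embedding x) = x"
  by (simp add: node_sampling_def[abs_def] hat_embedding_node)

interpretation c_C01: isometric_retract c_space c_norm C01 C01_norm hat_embedding node_sampling
proof unfold_locales
  show "hat_embedding x \<in> C01" "C01_norm (hat_embedding x) = c_norm x" if "x \<in> c_space" for x
    using that by (simp_all add: c_space_def hat_embedding_mem C01_norm_hat_embedding)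
  show "node_sampling f \<in> c_space" if "f \<in> C01" for f
    using node_sampling_LIMSEQ[OF that] by (auto simp: c_space_def convergent_def)
  show "c_norm (node_sampling f) \<le> C01_norm f" if "f \<in> C01" for f
    by (rule c_norm_le) (simp add: node_sampling_def abs_le_C01_norm[OF that])
  show "lin_on C01 node_sampling (\<lambda>f g i. f i + g i) (\<lambda>a f i. a * f i)"
    by (simp add: lin_on_def node_sampling_def[abs_def])
qed (simp_all add: hat_embedding_linear node_sampling_hat_embedding)

lemma node_sampling_kernel_vanishes_on_nodes:
  assumes g: "g \<in> C01" and kernel: "node_sampling g = (\<lambda>_. 0)" and s: "s \<in> nodes"
  shows "g s = 0"
proof -
  have "g 0 = 0"
    using node_sampling_LIMSEQ[OF g] kernel LIMSEQ_unique by (metis tendsto_const)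
  moreover have "g (node n) = 0" for n
    using fun_cong[OF kernel, of n] by (simp add: node_sampling_def)
  ultimately show ?thesis using s by (auto simp: nodes_def)
qed

lemma C01_large_values_far_from_zeros:
  assumes g: "g \<in> C01" and S: "S \<subseteq> {0..1}" "S \<noteq> {}" "\<And>s. s \<in> S \<Longrightarrow> g s = 0"
    and \<delta>: "\<delta> > 0"
  obtains \<eta> where "\<eta> > 0" "\<And>t. \<delta> < \<bar>g t\<bar> \<Longrightarrow> t \<in> {0..1} \<and> \<eta> \<le> infdist t S"
proof -
  have "uniformly_continuous_on {0..1} g"
    using g by (intro compact_uniformly_continuous) (auto simp: C01_def)
  then obtain \<eta> where \<eta>: "\<eta> > 0"
    and uc: "\<And>s t. s \<in> {0..1} \<Longrightarrow> t \<in> {0..1} \<Longrightarrow> dist s t < \<eta> \<Longrightarrow> dist (g s) (g t) < \<delta>"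
    unfolding uniformly_continuous_on_def using \<delta> by metis
  have "t \<in> {0..1} \<and> \<eta> \<le> infdist t S" if large: "\<delta> < \<bar>g t\<bar>" for t
  proof
    show t: "t \<in> {0..1}" using large g \<delta> by (auto simp: C01_def)
    have "\<eta> \<le> dist t s" if "s \<in> S" for s
      using uc[OF t] S(1,3) that large by (force simp: dist_real_def)
    then show "\<eta> \<le> infdist t S"
      using S(2) by (simp add: infdist_notempty cINF_greatest)
  qed
  then show ?thesis using that \<eta> by blast
qed

lemma kernel_headroom_approximable:
  assumes g: "g \<in> C01" and kernel: "node_sampling g = (\<lambda>_. 0)"
  shows "c_C01.headroom_approximable g"
  unfolding c_C01.headroom_approximable_def
proof (intro allI impI)
  fix \<delta> :: real assume \<delta>: "\<delta> > 0"
  obtain \<eta> where \<eta>: "\<eta> > 0"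
    and far: "\<And>t. \<delta> < \<bar>g t\<bar> \<Longrightarrow> t \<in> {0..1} \<and> \<eta> \<le> infdist t nodes"
    using C01_large_values_far_from_zeros[OF g nodes_subset_unit_interval _
        node_sampling_kernel_vanishes_on_nodes[OF g kernel] \<delta>]
    unfolding nodes_def by blast
  define v where "v t = max (- \<delta>) (min \<delta> (g t))" for t
  define u where "u t = g t - v t" for t
  define \<kappa> where "\<kappa> = \<eta> / (C01_norm g + 1)"
  have g_out: "g t = 0" if "t \<notin> {0..1}" for t using g that by (simp add: C01_def)
  have u_le: "\<bar>u t\<bar> \<le> \<bar>g t\<bar>" and u_far: "u t \<noteq> 0 \<Longrightarrow> \<delta> < \<bar>g t\<bar>" for t
    using \<delta> by (auto simp: u_def v_def)
  have "v \<in> C01" "u \<in> C01"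
    using g g_out \<delta> by (auto simp: C01_def u_def v_def intro!: continuous_intros)
  moreover have "C01_norm v \<le> \<delta>"
    using \<delta> by (intro C01_norm_le) (auto simp: v_def)
  moreover have "\<kappa> > 0"
    using \<eta> C01.norm_nonneg[OF g] by (simp add: \<kappa>_def)
  moreover have "C01_norm (\<lambda>t. hat_embedding x t + \<kappa> * u t) \<le> 1"
    if x: "x \<in> c_space" "c_norm x \<le> 1" for x
  proof (rule C01_norm_le)
    fix t :: real assume t: "t \<in> {0..1}"
    have "\<kappa> * \<bar>u t\<bar> \<le> \<kappa> * \<bar>g t\<bar>"
      using u_le \<open>\<kappa> > 0\<close> by (simp add: mult_left_mono)
    also have "\<dots> \<le> \<eta>"
      using abs_le_C01_norm[OF g, of t] C01.norm_nonneg[OF g] \<eta> by (simp add: \<kappa>_def divide_simps)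
    finally have "\<kappa> * \<bar>u t\<bar> \<le> \<eta>" .
    then have "\<kappa> * \<bar>u t\<bar> \<le> infdist t nodes"
      using infdist_nonneg[of t nodes] far u_far by (cases "u t = 0") force+
    moreover have "\<bar>hat_embedding x t + \<kappa> * u t\<bar> \<le> \<bar>hat_embedding x t\<bar> + \<kappa> * \<bar>u t\<bar>"
      using abs_triangle_ineq[of "hat_embedding x t" "\<kappa> * u t"] \<open>\<kappa> > 0\<close> by (simp add: abs_mult)
    ultimately show "\<bar>hat_embedding x t + \<kappa> * u t\<bar> \<le> 1"
      using abs_hat_embedding_le_headroom[of x t] x t by (simp add: c_space_def)
  qed
  moreover have "g = (\<lambda>t. u t + v t)" by (simp add: u_def)
  ultimately show "\<exists>u\<in>C01. \<exists>v\<in>C01. \<exists>\<kappa>>0. g = (\<lambda>t. u t + v t) \<and> C01_norm v \<le> \<delta> \<and>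
      (\<forall>x\<in>c_space. c_norm x \<le> 1 \<longrightarrow> C01_norm (\<lambda>t. hat_embedding x t + \<kappa> * u t) \<le> 1)"
    by blast
qed

theorem corollary6p17:
  shows "U_embeddable c_space c_norm C01 C01_norm"
  unfolding U_embeddable_def
  using c_C01.U_embedding_if_kernel_headroom_approximable kernel_headroom_approximable by blast

end
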